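(* Let $Q$ be a set and $(F_i)_{i\in I}$ a family of real-valued maps on $Q$ that is of type $c_0\ell_1$. Then the cardinality of the set $\{t\in Q:(F_i(t))_{i\in I}\notin c_0(I)\}$ is less than or equal to the cardinality of $I$.
   Context: $c_0(I)$ is the set of real families $(a_i)_{i\in I}$ such that $\{i:|a_i|\ge\varepsilon\}$ is finite for every $\varepsilon>0$; write $\lim_{i\in I}a_i=0$ for this. A family $(F_i)_{i\in I}$ of real-valued maps on a set $Q$ is of type $c_0\ell_1$ if one can write $F_i(t)=a_{i,t}+b_{i,t}$ for all $i\in I$, $t\in Q$, with $\lim_{i\in I}a_{i,t}=0$ for every $t\in Q$ and $\sup_{i\in I}\sum_{t\in Q}|b_{i,t}|<\infty$. *)

theory Defs
  imports "HOL-Analysis.Analysis"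
begin

definition c0_on :: "'i set \<Rightarrow> ('i \<Rightarrow> real) \<Rightarrow> bool" where
  "c0_on I a \<longleftrightarrow> (\<forall>\<epsilon>>0. finite {i\<in>I. \<bar>a i\<bar> \<ge> \<epsilon>})"

text \<open>Type c_0 l_1: F i t = a i t + b i t with (a i t)_i in c_0(I) for each t in Q and
  sup over i of sum over t in Q of |b i t| finite (the sum of nonnegative terms being the
  supremum of its finite partial sums).\<close>
definition type_c0l1 :: "'i set \<Rightarrow> 'q set \<Rightarrow> ('i \<Rightarrow> 'q \<Rightarrow> real) \<Rightarrow> bool" where
  "type_c0l1 I Q F \<longleftrightarrow>
     (\<exists>a b C. (\<forall>i\<in>I. \<forall>t\<in>Q. F i t = a i t + b i t)
        \<and> (\<forall>t\<in>Q. c0_on I (\<lambda>i. a i t))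
        \<and> (\<forall>i\<in>I. \<forall>T. finite T \<longrightarrow> T \<subseteq> Q \<longrightarrow> (\<Sum>t\<in>T. \<bar>b i t\<bar>) \<le> (C::real)))"

end

theory Submission
  imports Defs
begin

unbundle cardinal_syntax

text \<open>If \<open>(F i t)\<^sub>i\<close> is not in \<open>c\<^sub>0(I)\<close>, then \<open>b i t \<noteq> 0\<close> for some \<open>i \<in> I\<close>, since otherwise
  \<open>F i t = a i t\<close> for all \<open>i\<close>. Each \<open>b i\<close> has uniformly bounded finite partial sums of
  absolute values, so it is summable and has countable support. The exceptional set thus
  lies in a union of \<open>|I|\<close> countable sets, which has cardinality at most \<open>|I|\<close> when \<open>I\<close> is
  infinite; for finite \<open>I\<close> every family lies in \<open>c\<^sub>0(I)\<close> and the set is empty.\<close>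

lemma c0_on_finite: "finite I \<Longrightarrow> c0_on I a"
  unfolding c0_on_def by simp

lemma c0_on_cong: "(\<And>i. i \<in> I \<Longrightarrow> a i = a' i) \<Longrightarrow> c0_on I a = c0_on I a'"
  unfolding c0_on_def by (metis (mono_tags, lifting) Collect_cong)

lemma countable_support_if_bounded_finite_sums:
  fixes g :: "'q \<Rightarrow> real"
  assumes "\<And>T. finite T \<Longrightarrow> T \<subseteq> Q \<Longrightarrow> (\<Sum>t\<in>T. \<bar>g t\<bar>) \<le> C"
  shows "countable {t\<in>Q. g t \<noteq> 0}"
proof -
  have "(\<lambda>t. \<bar>g t\<bar>) summable_on Q"
    using assms by (intro nonneg_bdd_above_summable_on) (auto simp: bdd_above_def)
  then show ?thesis
    using summable_countable_real by fastforce
qed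

lemma countable_card_of_ordLeq_infinite:
  assumes "countable A" and "infinite B"
  shows "|A| \<le>o |B|"
proof -
  obtain f :: "'a \<Rightarrow> nat" where "inj_on f A"
    using assms(1) unfolding countable_def by blast
  then have "|A| \<le>o |UNIV :: nat set|"
    using card_of_ordLeq by blast
  also have "|UNIV :: nat set| \<le>o |B|"
    using assms(2) infinite_iff_card_of_nat by blast
  finally show ?thesis .
qed

lemma card_of_UN_countable_ordLeq_infinite:
  assumes "infinite I" and "\<And>i. i \<in> I \<Longrightarrow> countable (A i)"
  shows "|\<Union>i\<in>I. A i| \<le>o |I|"
  using assms countable_card_of_ordLeq_infinite
  by (intro card_of_UNION_ordLeq_infinite[OF assms(1) ordLeq_refl[OF card_of_Card_order]]) blast

lemma not_c0_on_subset_UN_support: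
  assumes "\<forall>i\<in>I. \<forall>t\<in>Q. F i t = a i t + b i t" and "\<forall>t\<in>Q. c0_on I (\<lambda>i. a i t)"
  shows "{t\<in>Q. \<not> c0_on I (\<lambda>i. F i t)} \<subseteq> (\<Union>i\<in>I. {t\<in>Q. b i t \<noteq> 0})"
proof
  fix t assume t: "t \<in> {t\<in>Q. \<not> c0_on I (\<lambda>i. F i t)}"
  show "t \<in> (\<Union>i\<in>I. {t\<in>Q. b i t \<noteq> 0})"
  proof (rule ccontr)
    assume "t \<notin> (\<Union>i\<in>I. {t\<in>Q. b i t \<noteq> 0})"
    then have "c0_on I (\<lambda>i. F i t) = c0_on I (\<lambda>i. a i t)"
      using t assms(1) by (intro c0_on_cong) auto
    with t assms(2) show False by auto
  qed
qed

theorem proposition2p6: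
  fixes I :: "'i set" and Q :: "'q set" and F :: "'i \<Rightarrow> 'q \<Rightarrow> real"
  assumes "type_c0l1 I Q F"
  shows "(card_of {t\<in>Q. \<not> c0_on I (\<lambda>i. F i t)}, card_of I) \<in> ordLeq"
proof (cases "finite I")
  case True
  then show ?thesis by (simp add: c0_on_finite card_of_empty)
next
  case infinite_I: False
  obtain a b C where F_eq: "\<forall>i\<in>I. \<forall>t\<in>Q. F i t = a i t + b i t"
    and a_c0: "\<forall>t\<in>Q. c0_on I (\<lambda>i. a i t)"
    and b_bounded: "\<forall>i\<in>I. \<forall>T. finite T \<longrightarrow> T \<subseteq> Q \<longrightarrow> (\<Sum>t\<in>T. \<bar>b i t\<bar>) \<le> (C::real)"
    using assms unfolding type_c0l1_def by blast
  have "countable {t\<in>Q. b i t \<noteq> 0}" if "i \<in> I" for i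
    using that b_bounded by (intro countable_support_if_bounded_finite_sums[of Q "b i" C]) auto
  then have "|\<Union>i\<in>I. {t\<in>Q. b i t \<noteq> 0}| \<le>o |I|"
    using infinite_I by (intro card_of_UN_countable_ordLeq_infinite)
  with card_of_mono1[OF not_c0_on_subset_UN_support[OF F_eq a_c0]] show ?thesis
    by (rule ordLeq_transitive)
qed

end
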